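(* For any positive integer $\nu$, there exists a sequence of length $\nu^2+1$ consisting of $\nu$ symbols and having the isolated equality property.
   Context: A finite or infinite sequence $(x_0,x_1,x_2,\ldots)$ is said to have the isolated equality property if for all distinct positions $i\neq j$, whenever $x_i=x_j$ we have $x_{i+1}\neq x_{j+1}$ and $x_{i-1}\neq x_{j-1}$ (for those indices that exist in the sequence); that is, equality at any pair of locations implies inequality at the pair of their immediate successors and at the pair of their immediate predecessors. (This property is satisfied by state sequences of counter-assisted generators $x_i=f(x_{i-1})+i \pmod n$, for positions $i\neq j \pmod n$.) *)

theory Defs
  imports Main
begin

definition isolated_equality :: "'a list \<Rightarrow> bool" where
  "isolated_equality xs \<longleftrightarrow>
     (\<forall>i j. i < length xs \<and> j < length xs \<and> i \<noteq> j \<and> xs ! i = xs ! j \<longrightarrow>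
        (Suc i < length xs \<and> Suc j < length xs \<longrightarrow> xs ! Suc i \<noteq> xs ! Suc j) \<and>
        (0 < i \<and> 0 < j \<longrightarrow> xs ! (i - 1) \<noteq> xs ! (j - 1)))"

end

theory Submission
  imports Defs
begin

text \<open>If no ordered pair of symbols occurs twice as a pair of consecutive entries, two equal
  entries can agree neither in their successors nor in their predecessors. Such a sequence of
  length \<open>\<nu>\<^sup>2 + 1\<close> over \<open>\<nu>\<close> symbols is an Eulerian walk in the complete directed graph with
  loops on \<open>\<nu>\<close> vertices; it is built by induction on \<open>\<nu>\<close>: a walk using all pairs of the
  symbols \<open>0, \<dots>, m\<close> and ending in \<open>0\<close> is extended by
  \<open>n, n, 1, n, 2, \<dots>, n, n - 1, n, 0\<close> with \<open>n = m + 1\<close>, which adds exactly the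
  \<open>2n + 1\<close> pairs involving \<open>n\<close> and again ends in \<open>0\<close>.\<close>

definition adjacent_pairs :: "'a list \<Rightarrow> ('a \<times> 'a) list" where
  "adjacent_pairs xs = zip xs (tl xs)"

lemma length_adjacent_pairs [simp]: "length (adjacent_pairs xs) = length xs - 1"
  by (simp add: adjacent_pairs_def)

lemma adjacent_pairs_append:
  "xs \<noteq> [] \<Longrightarrow> adjacent_pairs (xs @ ys) = adjacent_pairs xs @ adjacent_pairs (last xs # ys)"
  unfolding adjacent_pairs_def by (induction xs rule: induct_list012) auto

lemma isolated_equality_if_distinct_adjacent_pairs:
  assumes distinct: "distinct (adjacent_pairs xs)"
  shows "isolated_equality xs"
proof -
  have same_pair: "k = l"
    if "Suc k < length xs" "Suc l < length xs" "xs ! k = xs ! l" "xs ! Suc k = xs ! Suc l" for k l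
  proof -
    have "adjacent_pairs xs ! k = adjacent_pairs xs ! l"
      using that by (simp add: adjacent_pairs_def nth_tl)
    then show ?thesis
      using nth_eq_iff_index_eq[OF distinct] that by simp
  qed
  show ?thesis
    unfolding isolated_equality_def
  proof (intro allI impI conjI)
    fix i j
    assume ij: "i < length xs \<and> j < length xs \<and> i \<noteq> j \<and> xs ! i = xs ! j"
    show "xs ! Suc i \<noteq> xs ! Suc j" if "Suc i < length xs \<and> Suc j < length xs"
      using that ij same_pair[of i j] by blast
    show "xs ! (i - 1) \<noteq> xs ! (j - 1)" if "0 < i \<and> 0 < j"
    proof -
      from that obtain i' j' where "i = Suc i'" "j = Suc j'"
        by (cases i; cases j) simp_all
      then show ?thesis
        using ij same_pair[of i' j'] by auto
    qed
  qed
qed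

lemma set_adjacent_pairs_interleave:
  "set (adjacent_pairs (x # concat (map (\<lambda>a. [n, a]) as))) =
     (\<lambda>y. (y, n)) ` set (butlast (x # as)) \<union> Pair n ` set as"
  by (induction as arbitrary: x) (auto simp: adjacent_pairs_def)

definition pair_block :: "nat \<Rightarrow> nat list" where
  "pair_block n = n # concat (map (\<lambda>a. [n, a]) ([1..<n] @ [0]))"

lemma length_pair_block:
  assumes "n > 0"
  shows "length (pair_block n) = 2 * n + 1"
proof -
  have "length (concat (map (\<lambda>a. [n, a]) as)) = 2 * length as" for as :: "nat list"
    by (induction as) auto
  then show ?thesis
    using assms by (simp add: pair_block_def)
qed

lemma set_pair_block: "set (pair_block n) \<subseteq> {..n}"
  by (auto simp: pair_block_def)

lemma pair_block_nonempty: "pair_block n \<noteq> []"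
  by (simp add: pair_block_def)

lemma last_pair_block: "last (pair_block n) = 0"
  by (simp add: pair_block_def)

lemma set_adjacent_pairs_pair_block:
  "set (adjacent_pairs (0 # pair_block n)) = (\<lambda>y. (y, n)) ` {..n} \<union> Pair n ` {..n}"
proof -
  have "set (adjacent_pairs (0 # pair_block n)) =
      insert (0, n) ((\<lambda>y. (y, n)) ` set (n # [1..<n]) \<union> Pair n ` set ([1..<n] @ [0]))"
    using set_adjacent_pairs_interleave[of n n "[1..<n] @ [0]"]
    by (simp add: pair_block_def adjacent_pairs_def butlast_append)
  also have "\<dots> = (\<lambda>y. (y, n)) ` {..n} \<union> Pair n ` {..n}"
    by (auto simp: image_iff)
  finally show ?thesis .
qed

fun pair_walk :: "nat \<Rightarrow> nat list" where
  "pair_walk 0 = [0, 0]"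
| "pair_walk (Suc m) = pair_walk m @ pair_block (Suc m)"

lemma pair_walk_nonempty: "pair_walk m \<noteq> []"
  by (cases m) (simp_all add: pair_block_nonempty)

lemma last_pair_walk: "last (pair_walk m) = 0"
  by (cases m) (simp_all add: last_pair_block pair_block_nonempty)

lemma length_pair_walk: "length (pair_walk m) = (m + 1)\<^sup>2 + 1"
  by (induction m) (auto simp: length_pair_block power2_eq_square)

lemma set_pair_walk: "set (pair_walk m) \<subseteq> {..m}"
  by (induction m) (use set_pair_block in fastforce)+

lemma set_adjacent_pairs_pair_walk: "set (adjacent_pairs (pair_walk m)) = {..m} \<times> {..m}"
proof (induction m)
  case 0
  then show ?case by (auto simp: adjacent_pairs_def)
next
  case (Suc m)
  have "adjacent_pairs (pair_walk (Suc m)) =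
      adjacent_pairs (pair_walk m) @ adjacent_pairs (0 # pair_block (Suc m))"
    using adjacent_pairs_append[OF pair_walk_nonempty] by (simp add: last_pair_walk)
  then show ?case
    using Suc.IH by (auto simp: set_adjacent_pairs_pair_block le_Suc_eq)
qed

lemma distinct_adjacent_pairs_pair_walk: "distinct (adjacent_pairs (pair_walk m))"
proof (rule card_distinct)
  show "card (set (adjacent_pairs (pair_walk m))) = length (adjacent_pairs (pair_walk m))"
    by (simp add: set_adjacent_pairs_pair_walk length_pair_walk card_cartesian_product
        power2_eq_square)
qed

theorem mainTheorem5:
  fixes \<nu> :: nat
  assumes "\<nu> \<ge> 1"
  shows "\<exists>xs :: nat list. length xs = \<nu>^2 + 1 \<and> set xs \<subseteq> {..<\<nu>} \<and> isolated_equality xs"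
proof -
  obtain m where \<nu>: "\<nu> = Suc m"
    using assms by (cases \<nu>) auto
  have "length (pair_walk m) = \<nu>^2 + 1"
    using \<nu> length_pair_walk by simp
  moreover have "set (pair_walk m) \<subseteq> {..<\<nu>}"
    using \<nu> set_pair_walk lessThan_Suc_atMost by simp
  moreover have "isolated_equality (pair_walk m)"
    by (rule isolated_equality_if_distinct_adjacent_pairs[OF distinct_adjacent_pairs_pair_walk])
  ultimately show ?thesis
    by blast
qed

end
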